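(* Let $s_1\ge 1$ and $s_2\ge 0$ be integers. The maximum value over integers $N$ of $\sum_i\binom{s_1}{i}\binom{s_2}{N}\binom{s_1}{N-i}\binom{N}{i}$ occurs when $$N=\left\lfloor 2s_1+s_2+\tfrac32-\sqrt{4s_1^2+4s_1+(s_2+\tfrac12)^2}\right\rfloor+\delta$$ with $\delta\in\{0,1\}$. Consequently, in the probabilistic model described below with $s_3=s_1$, the most likely value of $|A\cup B\cup C|$ is $$\left\lceil \sqrt{4s_1^2+4s_1+(s_2+\tfrac12)^2}-\tfrac32\right\rceil-\delta.$$
   Context: Binomial coefficients $\binom{a}{b}$ are $0$ when $b<0$ or $b>a$. Probabilistic model: let $\widehat A,\widehat B,\widehat C$ be disjoint sets with $|\widehat A|=s_1$, $|\widehat B|=s_2$, $|\widehat C|=s_3$. The sample space consists of all 4-tuples $(A_1,B_1,B_2,C_2)$ with $A_1\subseteq\widehat A$, $B_1,B_2\subseteq\widehat B$, $C_2\subseteq\widehat C$, $|A_1|=|B_1|$, $|B_2|=|C_2|$ and $B_1\cap B_2=\emptyset$, each 4-tuple being equally likely. For such an outcome one sets $|A\cup B\cup C|=s_1+s_2+s_3-|B_1|-|B_2|$ (modeling sets $A,C$ with $A\cap C=\emptyset$, $|A|=s_1$, $|B|=s_2$, $|C|=s_3$). The "most likely value" is the value $v$ maximizing the probability that $|A\cup B\cup C|=v$. *)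

theory Defs
  imports Complex_Main
begin

text \<open>The summation in the corollary, as a function of an integer N
  (all binomials vanish for N < 0; for i outside 0..N the factor (N choose i) is 0).\<close>
definition cor_sum :: "nat \<Rightarrow> nat \<Rightarrow> int \<Rightarrow> nat" where
  "cor_sum s1 s2 N = (if N < 0 then 0 else
     (\<Sum>i\<le>nat N. (s1 choose i) * (s2 choose nat N) * (s1 choose (nat N - i)) * (nat N choose i)))"

definition sample_space :: "'a set \<Rightarrow> 'a set \<Rightarrow> 'a set \<Rightarrow> ('a set \<times> 'a set \<times> 'a set \<times> 'a set) set" where
  "sample_space Ah Bh Ch = {(A1, B1, B2, C2). A1 \<subseteq> Ah \<and> B1 \<subseteq> Bh \<and> B2 \<subseteq> Bh \<and> C2 \<subseteq> Ch
      \<and> card A1 = card B1 \<and> card B2 = card C2 \<and> B1 \<inter> B2 = {}}"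

definition union_size :: "'a set \<Rightarrow> 'a set \<Rightarrow> 'a set \<Rightarrow> ('a set \<times> 'a set \<times> 'a set \<times> 'a set) \<Rightarrow> int" where
  "union_size Ah Bh Ch \<omega> = (case \<omega> of (A1, B1, B2, C2) \<Rightarrow>
      int (card Ah) + int (card Bh) + int (card Ch) - int (card B1) - int (card B2))"

definition prob_union :: "'a set \<Rightarrow> 'a set \<Rightarrow> 'a set \<Rightarrow> int \<Rightarrow> real" where
  "prob_union Ah Bh Ch v =
     real (card {\<omega> \<in> sample_space Ah Bh Ch. union_size Ah Bh Ch \<omega> = v})
     / real (card (sample_space Ah Bh Ch))"

end

theory Submission
  imports Defs
begin

text \<open>Write \<open>c\<^sub>k = (s choose k) / k!\<close> and let \<open>h(N) = \<Sum>\<^sub>k c\<^sub>k c\<^sub>N\<^sub>-\<^sub>k\<close>;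
  then the sum equals \<open>(s\<^sub>2 choose N) N! h(N)\<close> with \<open>s = s\<^sub>1\<close>. Creative
  telescoping gives a three-term recurrence for \<open>h\<close>, and from it the ratio
  \<open>h(N+1)/h(N)\<close> is trapped between \<open>2(2s-N)/(N\<^sup>2+N+2s)\<close> and \<open>2(2s-N)/(N+1)\<^sup>2\<close>:
  both bounds hold at \<open>N = 0\<close> and at \<open>N = 2s-1\<close>, and the recurrence carries them upward
  while a certain quadratic in \<open>N\<close> is non-positive and downward once it is non-negative,
  which it stays after it first turns positive. So the ratio \<open>(s\<^sub>2-N) h(N+1)/h(N)\<close> of
  consecutive terms is at least 1 while \<open>N+1 \<le> r\<close> and at most 1 once \<open>N \<ge> r\<close>, where
  \<open>r = 2s\<^sub>1+s\<^sub>2+3/2-\<surd>(4s\<^sub>1\<^sup>2+4s\<^sub>1+(s\<^sub>2+1/2)\<^sup>2)\<close>; the sum is unimodal with its maximum at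
  \<open>\<lfloor>r\<rfloor>\<close> or \<open>\<lfloor>r\<rfloor>+1\<close>. In the probabilistic model with \<open>s\<^sub>3 = s\<^sub>1\<close> the outcomes with
  \<open>|A \<union> B \<union> C| = 2s\<^sub>1+s\<^sub>2-N\<close> are counted by the same sum, which turns the maximiser
  \<open>N\<close> into the most likely value \<open>2s\<^sub>1+s\<^sub>2-N\<close>.\<close>

definition choose_div_fact :: "nat \<Rightarrow> nat \<Rightarrow> real" where
  "choose_div_fact s k = real (s choose k) / fact k"

lemma Suc_times_binomial_diff: "Suc k * (n choose Suc k) = (n - k) * (n choose k)"
  using binomial_absorption[of k n] binomial_absorb_comp[of n k] by simp

lemma choose_div_fact_0 [simp]: "choose_div_fact s 0 = 1"
  by (simp add: choose_div_fact_def)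

lemma choose_div_fact_Suc_0 [simp]: "choose_div_fact s (Suc 0) = real s"
  by (simp add: choose_div_fact_def)

lemma choose_div_fact_eq_0: "s < k \<Longrightarrow> choose_div_fact s k = 0"
  by (simp add: choose_div_fact_def)

lemma choose_div_fact_nonneg: "choose_div_fact s k \<ge> 0"
  by (simp add: choose_div_fact_def)

lemma choose_div_fact_Suc:
  "choose_div_fact s (Suc k) = (real s - real k) * choose_div_fact s k / (real k + 1)^2"
proof (cases "k \<le> s")
  case True
  have absorb: "(real k + 1) * real (s choose Suc k) = (real s - real k) * real (s choose k)"
    using Suc_times_binomial_diff[of k s] True by (metis of_nat_Suc add.commute of_nat_diff of_nat_mult)
  have "choose_div_fact s (Suc k) = (real k + 1) * real (s choose Suc k) / ((real k + 1)^2 * fact k)"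
    unfolding choose_div_fact_def fact_Suc by (simp add: power2_eq_square add.commute)
  also have "\<dots> = (real s - real k) * choose_div_fact s k / (real k + 1)^2"
    unfolding absorb choose_div_fact_def by simp
  finally show ?thesis .
qed (simp add: choose_div_fact_def binomial_eq_0)

text \<open>The coefficient of \<open>x\<^sup>n\<close> in \<open>(\<Sum>\<^sub>k (s choose k) x\<^sup>k / k!)\<^sup>2\<close>.\<close>
definition square_coeff :: "nat \<Rightarrow> nat \<Rightarrow> real" where
  "square_coeff s n = (\<Sum>k\<le>n. choose_div_fact s k * choose_div_fact s (n - k))"

lemma square_coeff_nonneg: "square_coeff s n \<ge> 0"
  unfolding square_coeff_def by (intro sum_nonneg mult_nonneg_nonneg choose_div_fact_nonneg)

lemma square_coeff_eq_0: "2 * s < n \<Longrightarrow> square_coeff s n = 0"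
  unfolding square_coeff_def by (intro sum.neutral) (auto intro!: choose_div_fact_eq_0)

text \<open>A creative-telescoping certificate: the summands of the recurrence for
  \<open>square_coeff\<close> below are its forward differences.\<close>
definition recurrence_certificate :: "nat \<Rightarrow> nat \<Rightarrow> nat \<Rightarrow> real" where
  "recurrence_certificate s M k =
     (real k)^2 * choose_div_fact s k * choose_div_fact s (M + 1 - k)
     * ((2*real s - real M) * real k - (real M + 2)*(3*real s + 1 - real M)) / (real (M + 2 - k))^2"

lemma recurrence_certificate_Suc:
  assumes "k \<le> M"
  shows "recurrence_certificate s M (Suc k) - recurrence_certificate s M k =
    (real M + 2)^3 * (choose_div_fact s k * choose_div_fact s (M + 2 - k))
    - (2*real s + (4*real s - 1)*(real M + 1) - 3*(real M + 1)^2) * (choose_div_fact s k * choose_div_fact s (M + 1 - k))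
    - 2*(2*real s - real M) * (choose_div_fact s k * choose_div_fact s (M - k))"
proof -
  let ?c = "choose_div_fact s" and ?G = "recurrence_certificate s M"
  define S where "S = real s"
  obtain j where M: "M = k + j" using le_Suc_ex[OF assms] by blast
  have Mj: "real M = real k + real j" using M by simp
  have idx: "M + 1 - Suc k = j" "M + 2 - Suc k = Suc j" "M + 1 - k = Suc j"
    "M + 2 - k = Suc (Suc j)" "M - k = j"
    using M by auto
  have c1: "?c (Suc j) = (S - real j) * ?c j / (real j + 1)^2"
    unfolding choose_div_fact_Suc S_def ..
  have c2: "?c (Suc (Suc j)) = (S - real j - 1) * ((S - real j) * ?c j / (real j + 1)^2) / (real j + 2)^2"
    unfolding choose_div_fact_Suc[of s "Suc j"] c1 by (simp add: add.commute diff_diff_eq S_def)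
  have "(real (Suc k))^2 * ?c (Suc k) = (S - real k) * ?c k"
    unfolding choose_div_fact_Suc S_def by (simp add: add.commute)
  then have G1: "?G (Suc k) = (S - real k) * ?c k * ?c j
      * ((2*S - (real k + real j)) * (real k + 1) - (real k + real j + 2)*(3*S + 1 - (real k + real j))) / (real j + 1)^2"
    unfolding recurrence_certificate_def idx S_def Mj by (simp add: add.commute)
  have G0: "?G k = (real k)^2 * ?c k * ((S - real j) * ?c j / (real j + 1)^2)
      * ((2*S - (real k + real j)) * real k - (real k + real j + 2)*(3*S + 1 - (real k + real j))) / (real j + 2)^2"
    unfolding recurrence_certificate_def idx c1 S_def Mj by (simp add: add.commute)
  have "(S - k) * X * Y * ((2*S - (k+j)) * (k + 1) - (k+j+2)*(3*S+1-(k+j))) / (j + 1)^2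
     - k^2 * X * ((S - j) * Y / (j + 1)^2) * ((2*S - (k+j)) * k - (k+j+2)*(3*S+1-(k+j))) / (j + 2)^2
   = (k+j+2)^3 * (X * ((S - j - 1) * ((S - j) * Y / (j + 1)^2) / (j + 2)^2))
     - (2*S + (4*S - 1)*(k+j+1) - 3*(k+j+1)^2) * (X * ((S - j) * Y / (j + 1)^2)) - 2*(2*S - (k+j)) * (X * Y)"
    if "k \<ge> 0" "j \<ge> 0" for k j X Y :: real
    using that by (simp add: divide_simps) algebra
  from this[of "real k" "real j" "?c k" "?c j"] show ?thesis
    unfolding G1 G0 idx c1 c2 Mj S_def by (simp add: add.assoc)
qed

lemma square_coeff_recurrence:
  fixes s M :: nat
  shows "(real M + 2)^3 * square_coeff s (M + 2) =
    (2*real s + (4*real s - 1)*(real M + 1) - 3*(real M + 1)^2) * square_coeff s (M + 1)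
    + 2*(2*real s - real M) * square_coeff s M"
proof -
  let ?c = "choose_div_fact s" and ?G = "recurrence_certificate s M"
  define S m where "S = real s" and "m = real M"
  define a b where "a = 2*S - m" and "b = 2*S + (4*S - 1)*(m + 1) - 3*(m + 1)^2"
  define t where "t k = (m + 2)^3 * (?c k * ?c (M + 2 - k)) - b * (?c k * ?c (M + 1 - k))
    - 2*a * (?c k * ?c (M - k))" for k
  have "(\<Sum>k<Suc M. t k) = (\<Sum>k<Suc M. ?G (Suc k) - ?G k)"
    using recurrence_certificate_Suc unfolding t_def a_def b_def S_def m_def by (intro sum.cong) auto
  also have "\<dots> = ?G (Suc M) - ?G 0"
    by (rule sum_lessThan_telescope)
  finally have tel: "(\<Sum>k<Suc M. t k) = ?G (Suc M)"
    by (simp add: recurrence_certificate_def)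
  have h2: "square_coeff s (M + 2) = (\<Sum>k<Suc M. ?c k * ?c (M + 2 - k)) + ?c (Suc M) * S + ?c (M + 2)"
    unfolding square_coeff_def S_def by (simp add: sum.atMost_Suc lessThan_Suc_atMost[symmetric])
  have h1: "square_coeff s (M + 1) = (\<Sum>k<Suc M. ?c k * ?c (M + 1 - k)) + ?c (Suc M)"
    unfolding square_coeff_def by (simp add: sum.atMost_Suc lessThan_Suc_atMost[symmetric])
  have h0: "square_coeff s M = (\<Sum>k<Suc M. ?c k * ?c (M - k))"
    unfolding square_coeff_def lessThan_Suc_atMost ..
  have sum_t: "(\<Sum>k<Suc M. t k) = (m + 2)^3 * (\<Sum>k<Suc M. ?c k * ?c (M + 2 - k))
      - b * (\<Sum>k<Suc M. ?c k * ?c (M + 1 - k)) - 2*a * (\<Sum>k<Suc M. ?c k * ?c (M - k))"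
    unfolding t_def sum_subtractf sum_distrib_left ..
  have boundary: "?G (Suc M) + (m + 2)^3 * (?c (Suc M) * S + ?c (M + 2)) - b * ?c (Suc M) = 0"
  proof -
    have "?c (M + 2) = (S - (m + 1)) * ?c (Suc M) / (m + 2)^2"
      using choose_div_fact_Suc[of s "Suc M"] unfolding S_def m_def by (simp add: add.commute)
    moreover have "?G (Suc M) = (m + 1)^2 * ?c (Suc M) * (a * (m + 1) - (m + 2)*(3*S + 1 - m))"
      unfolding recurrence_certificate_def a_def S_def m_def by (simp add: add.commute)
    moreover have "(m + 1)^2 * X * (a * (m + 1) - (m + 2)*(3*S + 1 - m))
        + (m + 2)^3 * (X * S + (S - (m + 1)) * X / (m + 2)^2) - b * X = 0" for X
      unfolding a_def b_def m_def by (simp add: divide_simps) algebra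
    ultimately show ?thesis by simp
  qed
  have "(m + 2)^3 * square_coeff s (M + 2) - b * square_coeff s (M + 1) - 2*a * square_coeff s M
      = (\<Sum>k<Suc M. t k) + ((m + 2)^3 * (?c (Suc M) * S + ?c (M + 2)) - b * ?c (Suc M))"
    unfolding h2 h1 h0 sum_t by (simp add: algebra_simps)
  also have "\<dots> = 0" using tel boundary by simp
  finally show ?thesis unfolding a_def b_def S_def m_def by simp
qed

definition ratio_bounds :: "nat \<Rightarrow> nat \<Rightarrow> bool" where
  "ratio_bounds s n \<longleftrightarrow>
     (real n + 1)^2 * square_coeff s (Suc n) \<le> 2*(2*real s - real n) * square_coeff s n \<and>
     2*(2*real s - real n) * square_coeff s n \<le> ((real n)^2 + real n + 2*real s) * square_coeff s (Suc n)"

text \<open>Where this is \<open>\<le> 0\<close> the recurrence carries \<open>ratio_bounds\<close> from \<open>n - 1\<close> to \<open>n\<close>,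
  where it is \<open>\<ge> 0\<close> from \<open>n\<close> to \<open>n - 1\<close>.\<close>
definition propagation_poly :: "nat \<Rightarrow> nat \<Rightarrow> real" where
  "propagation_poly s n = 3*(real n)^2 + (5 - 4*real s)*real n + 2 - 2*real s"

lemma propagation_identity:
  fixes S N :: real
  shows "(N^2 + N + 2*S) * (2*S + (4*S - 1)*N - 3*N^2 + N^2) - 2*(2*S - N)*(N + 1)^3
    = -(2*S - N) * (3*N^2 + (5 - 4*S)*N + 2 - 2*S)"
  by (simp add: algebra_simps power2_eq_square power3_eq_cube)

lemma propagation_poly_pos_mono:
  assumes pos: "propagation_poly s n > 0" and "n \<le> n'"
  shows "propagation_poly s n' > 0"
proof -
  define S a b where "S = real s" and "a = real n" and "b = real n'"
  have q: "3*a^2 + (5 - 4*S)*a + 2 - 2*S > 0" using pos unfolding propagation_poly_def S_def a_def by simp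
  have ab: "0 \<le> a" "a \<le> b" using \<open>n \<le> n'\<close> unfolding a_def b_def by auto
  have "(4*a + 2) * (6*a + 5 - 4*S) = 4 * (3*a^2 + (5 - 4*S)*a + 2 - 2*S) + 12*a^2 + 12*a + 2"
    by (simp add: algebra_simps power2_eq_square)
  then have "(4*a + 2) * (6*a + 5 - 4*S) > 0" using q ab by (smt (verit) zero_le_power2 mult_nonneg_nonneg)
  then have vertex: "6*a + 5 - 4*S > 0" using ab by (simp add: zero_less_mult_iff)
  have "3*b^2 + (5 - 4*S)*b + 2 - 2*S = (3*a^2 + (5 - 4*S)*a + 2 - 2*S) + (b - a)*(3*(a + b) + 5 - 4*S)"
    by (simp add: algebra_simps power2_eq_square)
  moreover have "(b - a)*(3*(a + b) + 5 - 4*S) \<ge> 0" using ab vertex by (intro mult_nonneg_nonneg) auto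
  ultimately show ?thesis using q unfolding propagation_poly_def S_def b_def by linarith
qed

lemma ratio_bounds_Suc:
  assumes P: "ratio_bounds s M" and q: "propagation_poly s (Suc M) \<le> 0" and lt: "Suc M < 2*s"
  shows "ratio_bounds s (Suc M)"
proof -
  define S N where "S = real s" and "N = real M + 1"
  define a b where "a = 2*S + 1 - N" and "b = 2*S + (4*S - 1)*N - 3*N^2"
  define x y z where "x = square_coeff s M" and "y = square_coeff s (Suc M)"
    and "z = square_coeff s (Suc (Suc M))"
  have rec: "(N + 1)^3 * z = b * y + 2*a*x"
    using square_coeff_recurrence[where s=s and M=M] unfolding S_def N_def a_def b_def x_def y_def z_def
    by (simp add: add.commute add.left_commute)
  have y0: "y \<ge> 0" unfolding y_def by (rule square_coeff_nonneg)
  have P1: "N^2 * y \<le> 2*a*x" and P2: "2*a*x \<le> (N^2 - N + 2*S) * y"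
    using P unfolding ratio_bounds_def S_def N_def a_def x_def y_def by (auto simp: algebra_simps power2_eq_square)
  have Npos: "N + 1 > 0" unfolding N_def by simp
  have SN: "2*S - N > 0" using lt unfolding S_def N_def by simp
  have qN: "3*N^2 + (5 - 4*S)*N + 2 - 2*S \<le> 0"
    using q unfolding propagation_poly_def S_def N_def by (simp add: add.commute)
  have low: "(N + 1)^2 * z \<le> 2*(2*S - N)*y"
  proof -
    have "(N + 1) * ((N + 1)^2 * z) = b*y + 2*a*x" using rec by (simp add: power3_eq_cube power2_eq_square algebra_simps)
    also have "\<dots> \<le> b*y + (N^2 - N + 2*S) * y" using P2 by simp
    also have "\<dots> = (N + 1) * (2*(2*S - N)*y)" unfolding b_def by (simp add: algebra_simps power2_eq_square)
    finally show ?thesis using Npos mult_le_cancel_left_pos by blast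
  qed
  have up: "2*(2*S - N)*y \<le> (N^2 + N + 2*S) * z"
  proof -
    have key: "2*(2*S - N)*(N + 1)^3 \<le> (N^2 + N + 2*S)*(b + N^2)"
      using propagation_identity[of N S] mult_nonpos_nonpos[of "-(2*S - N)" "3*N^2 + (5 - 4*S)*N + 2 - 2*S"] SN qN
      unfolding b_def by linarith
    have "(N + 1)^3 * (2*(2*S - N)*y) = (2*(2*S - N)*(N + 1)^3) * y" by simp
    also have "\<dots> \<le> ((N^2 + N + 2*S)*(b + N^2)) * y" using key y0 by (rule mult_right_mono)
    also have "\<dots> = (N^2 + N + 2*S) * (b*y + N^2*y)" by (simp add: algebra_simps)
    also have "\<dots> \<le> (N^2 + N + 2*S) * ((N + 1)^3 * z)"
      using P1 rec by (intro mult_left_mono) (auto simp: N_def S_def)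
    finally show ?thesis using Npos by (simp add: mult.left_commute)
  qed
  show ?thesis unfolding ratio_bounds_def using low up unfolding S_def N_def y_def z_def by (simp add: add.commute)
qed

lemma ratio_bounds_pred:
  assumes P: "ratio_bounds s (Suc M)" and q: "propagation_poly s (Suc M) \<ge> 0" and lt: "Suc M < 2*s"
  shows "ratio_bounds s M"
proof -
  define S N where "S = real s" and "N = real M + 1"
  define a b where "a = 2*S + 1 - N" and "b = 2*S + (4*S - 1)*N - 3*N^2"
  define x y z where "x = square_coeff s M" and "y = square_coeff s (Suc M)"
    and "z = square_coeff s (Suc (Suc M))"
  have rec: "(N + 1)^3 * z = b * y + 2*a*x"
    using square_coeff_recurrence[where s=s and M=M] unfolding S_def N_def a_def b_def x_def y_def z_def
    by (simp add: add.commute add.left_commute)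
  have y0: "y \<ge> 0" unfolding y_def by (rule square_coeff_nonneg)
  have Q1: "(N + 1)^2 * z \<le> 2*(2*S - N)*y" and Q2: "2*(2*S - N)*y \<le> (N^2 + N + 2*S) * z"
    using P unfolding ratio_bounds_def S_def N_def y_def z_def by (auto simp: add.commute)
  have Npos: "N + 1 > 0" unfolding N_def by simp
  have SN: "2*S - N > 0" using lt unfolding S_def N_def by simp
  have qN: "3*N^2 + (5 - 4*S)*N + 2 - 2*S \<ge> 0"
    using q unfolding propagation_poly_def S_def N_def by (simp add: add.commute)
  have K: "N^2 + N + 2*S > 0" unfolding N_def S_def by (simp add: add_pos_nonneg)
  have up: "2*a*x \<le> (N^2 - N + 2*S) * y"
  proof -
    have "b*y + 2*a*x = (N + 1) * ((N + 1)^2 * z)" using rec by (simp add: power3_eq_cube power2_eq_square)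
    also have "\<dots> \<le> (N + 1) * (2*(2*S - N)*y)" using Q1 Npos by simp
    also have "\<dots> = b*y + (N^2 - N + 2*S) * y" unfolding b_def by (simp add: algebra_simps power2_eq_square)
    finally show ?thesis by simp
  qed
  have low: "N^2 * y \<le> 2*a*x"
  proof -
    have key: "(N^2 + N + 2*S)*N^2 \<le> 2*(2*S - N)*(N + 1)^3 - b*(N^2 + N + 2*S)"
      using propagation_identity[of N S] mult_nonneg_nonneg[of "2*S - N" "3*N^2 + (5 - 4*S)*N + 2 - 2*S"] SN qN
      unfolding b_def by (simp add: algebra_simps)
    have "(N^2 + N + 2*S) * (N^2 * y) = ((N^2 + N + 2*S)*N^2) * y" by simp
    also have "\<dots> \<le> (2*(2*S - N)*(N + 1)^3 - b*(N^2 + N + 2*S)) * y" using key y0 by (rule mult_right_mono)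
    also have "\<dots> = (N + 1)^3 * (2*(2*S - N)*y) - (N^2 + N + 2*S) * (b*y)" by (simp add: algebra_simps)
    also have "\<dots> \<le> (N + 1)^3 * ((N^2 + N + 2*S) * z) - (N^2 + N + 2*S) * (b*y)"
      using Q2 Npos by (intro diff_right_mono mult_left_mono) auto
    also have "\<dots> = (N^2 + N + 2*S) * ((N + 1)^3 * z - b*y)" by (simp add: algebra_simps)
    also have "\<dots> = (N^2 + N + 2*S) * (2*a*x)" using rec by simp
    finally show ?thesis using K mult_le_cancel_left_pos by blast
  qed
  show ?thesis unfolding ratio_bounds_def using low up unfolding S_def N_def a_def x_def y_def
    by (simp add: algebra_simps power2_eq_square)
qed

lemma square_coeff_1: "square_coeff s 1 = 2 * real s"
  by (simp add: square_coeff_def)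

lemma ratio_bounds_0: "1 \<le> s \<Longrightarrow> ratio_bounds s 0"
  unfolding ratio_bounds_def by (simp add: square_coeff_1 square_coeff_def)

text \<open>At the top index both bounds are equalities, since \<open>square_coeff s (2*s + 1) = 0\<close>
  turns the recurrence into a two-term relation.\<close>
lemma ratio_bounds_top:
  assumes "1 \<le> s"
  shows "ratio_bounds s (2*s - 1)"
proof -
  obtain t where s: "s = Suc t" using assms by (cases s) auto
  have top: "2*s - 1 = 2*t + 1" "Suc (2*t + 1) = 2*t + 1 + 1" using s by simp_all
  have "square_coeff s (2*t + 1 + 2) = 0" using s by (intro square_coeff_eq_0) simp
  then have "2 * square_coeff s (2*t + 1) = 4 * (real t + 1)^2 * square_coeff s (2*t + 1 + 1)"
    using square_coeff_recurrence[where s=s and M="2*t + 1"] unfolding s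
    by (simp add: algebra_simps power2_eq_square)
  then show ?thesis
    unfolding ratio_bounds_def top s by (simp add: algebra_simps power2_eq_square)
qed

lemma ratio_bounds_all:
  assumes s: "1 \<le> s" and n: "n < 2*s"
  shows "ratio_bounds s n"
proof (cases "\<exists>m. 1 \<le> m \<and> m \<le> n \<and> propagation_poly s m > 0")
  case False
  show ?thesis using le0[of n]
  proof (induction rule: dec_induct)
    case base show ?case using ratio_bounds_0[OF s] .
  next
    case (step k)
    have "propagation_poly s (Suc k) \<le> 0" using False \<open>k < n\<close> by (auto simp: not_less)
    moreover have "Suc k < 2*s" using \<open>k < n\<close> n by simp
    ultimately show ?case using ratio_bounds_Suc \<open>ratio_bounds s k\<close> by blast
  qed
next
  case True
  then obtain m where m: "m \<le> n" "propagation_poly s m > 0" by blast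
  have "n \<le> 2*s - 1" using n by simp
  then show ?thesis
  proof (induction rule: inc_induct)
    case base show ?case using ratio_bounds_top[OF s] .
  next
    case (step k)
    have "propagation_poly s (Suc k) \<ge> 0"
      using propagation_poly_pos_mono[OF m(2)] m(1) \<open>n \<le> k\<close> by (simp add: less_imp_le)
    moreover have "Suc k < 2*s" using \<open>k < 2*s - 1\<close> by simp
    ultimately show ?case using ratio_bounds_pred \<open>ratio_bounds s (Suc k)\<close> by blast
  qed
qed

lemma cor_sum_eq: "real (cor_sum s1 s2 (int N)) = real (s2 choose N) * fact N * square_coeff s1 N"
proof -
  have "real (cor_sum s1 s2 (int N)) =
      (\<Sum>i\<le>N. real (s2 choose N) * fact N * (choose_div_fact s1 i * choose_div_fact s1 (N - i)))"
    unfolding cor_sum_def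
    by (auto intro!: sum.cong simp: binomial_fact choose_div_fact_def field_simps)
  then show ?thesis unfolding square_coeff_def by (simp add: sum_distrib_left)
qed

lemma cor_sum_Suc:
  assumes "N \<le> s2"
  shows "real (cor_sum s1 s2 (int (Suc N))) =
    real (s2 choose N) * fact N * ((real s2 - real N) * square_coeff s1 (Suc N))"
proof -
  have absorb: "real (Suc N) * real (s2 choose Suc N) = (real s2 - real N) * real (s2 choose N)"
    using Suc_times_binomial_diff[of N s2] assms by (metis of_nat_diff of_nat_mult)
  have "real (cor_sum s1 s2 (int (Suc N)))
      = (real (Suc N) * real (s2 choose Suc N)) * fact N * square_coeff s1 (Suc N)"
    unfolding cor_sum_eq fact_Suc by (simp add: algebra_simps)
  then show ?thesis unfolding absorb by simp
qed

definition mode_bound :: "nat \<Rightarrow> nat \<Rightarrow> real" where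
  "mode_bound s1 s2 =
     2 * real s1 + real s2 + 3/2 - sqrt (4 * real s1 ^ 2 + 4 * real s1 + (real s2 + 1/2) ^ 2)"

lemma mode_bound_pos: "0 < mode_bound s1 s2"
proof -
  have "(2 * real s1 + real s2 + 3/2)^2 - (4 * real s1 ^ 2 + 4 * real s1 + (real s2 + 1/2) ^ 2)
      = 2 + 2 * real s1 + 2 * real s2 + 4 * (real s1 * real s2)"
    by (simp add: power2_eq_square algebra_simps)
  then have "4 * real s1 ^ 2 + 4 * real s1 + (real s2 + 1/2) ^ 2 < (2 * real s1 + real s2 + 3/2)^2"
    by (smt (verit) of_nat_0_le_iff mult_nonneg_nonneg)
  then show ?thesis unfolding mode_bound_def using real_less_lsqrt by fastforce
qed

lemma mode_bound_less:
  assumes "1 \<le> s1"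
  shows "mode_bound s1 s2 < real s2 + 1" and "mode_bound s1 s2 < 2 * real s1 + 1"
proof -
  have "4 * real s1 ^ 2 + 4 * real s1 + (real s2 + 1/2) ^ 2 - (2 * real s1 + 1/2)^2
      = 2 * real s1 + real s2 + (real s2)^2"
    by (simp add: power2_eq_square algebra_simps)
  then have "(2 * real s1 + 1/2)^2 < 4 * real s1 ^ 2 + 4 * real s1 + (real s2 + 1/2) ^ 2"
    using assms by (smt (verit) of_nat_0_le_iff of_nat_1 of_nat_le_iff zero_le_power2)
  then show "mode_bound s1 s2 < real s2 + 1" unfolding mode_bound_def using real_less_rsqrt by fastforce
  have "(real s2 + 1/2)^2 < 4 * real s1 ^ 2 + 4 * real s1 + (real s2 + 1/2) ^ 2"
    using assms by (simp add: add_nonneg_pos)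
  then show "mode_bound s1 s2 < 2 * real s1 + 1" unfolding mode_bound_def using real_less_rsqrt by fastforce
qed

lemma below_mode_bound:
  assumes "real n + 1 \<le> mode_bound s1 s2"
  shows "(real n)^2 + real n + 2*real s1 \<le> 2*(2*real s1 - real n)*(real s2 - real n)"
proof -
  have "4 * real s1 ^ 2 + 4 * real s1 + (real s2 + 1/2) ^ 2 \<le> (2*real s1 + real s2 + 1/2 - real n)^2"
    using assms unfolding mode_bound_def by (intro sqrt_le_D) simp
  then show ?thesis by (simp add: power2_eq_square algebra_simps)
qed

lemma above_mode_bound:
  assumes "mode_bound s1 s2 \<le> real n" and "n \<le> s2"
  shows "2*(2*real s1 - real n)*(real s2 - real n) \<le> (real n + 1)^2"
proof -
  have "(2*real s1 + real s2 + 3/2 - real n)^2 \<le> 4 * real s1 ^ 2 + 4 * real s1 + (real s2 + 1/2) ^ 2"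
    using assms unfolding mode_bound_def by (intro sqrt_ge_absD) simp
  then show ?thesis using assms(2) by (simp add: power2_eq_square algebra_simps)
qed

lemma cor_sum_le_Suc_below_mode:
  assumes s1: "1 \<le> s1" and below: "real N + 1 \<le> mode_bound s1 s2"
  shows "cor_sum s1 s2 (int N) \<le> cor_sum s1 s2 (int (Suc N))"
proof -
  define S n where "S = real s1" and "n = real N"
  have Ns2: "N < s2" and Ns1: "N < 2*s1" using below mode_bound_less[OF s1, of s2] by simp_all
  have "2*(2*S - n) * square_coeff s1 N \<le> (n^2 + n + 2*S) * square_coeff s1 (Suc N)"
    using ratio_bounds_all[OF s1 Ns1] unfolding ratio_bounds_def S_def n_def by simp
  also have "\<dots> \<le> 2*(2*S - n) * ((real s2 - n) * square_coeff s1 (Suc N))"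
    using below_mode_bound[OF below] square_coeff_nonneg unfolding S_def n_def
    by (metis mult.assoc mult_right_mono)
  finally have "square_coeff s1 N \<le> (real s2 - n) * square_coeff s1 (Suc N)"
    using Ns1 unfolding S_def n_def by simp
  then have "real (s2 choose N) * fact N * square_coeff s1 N
      \<le> real (s2 choose N) * fact N * ((real s2 - n) * square_coeff s1 (Suc N))"
    by (intro mult_left_mono) auto
  moreover have "real (cor_sum s1 s2 (int (Suc N)))
      = real (s2 choose N) * fact N * ((real s2 - n) * square_coeff s1 (Suc N))"
    using Ns2 unfolding n_def by (intro cor_sum_Suc) simp
  ultimately have "real (cor_sum s1 s2 (int N)) \<le> real (cor_sum s1 s2 (int (Suc N)))"
    unfolding cor_sum_eq[of s1 s2 N] by linarith
  then show ?thesis by (simp only: of_nat_le_iff)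
qed

lemma cor_sum_Suc_le_above_mode:
  assumes s1: "1 \<le> s1" and above: "mode_bound s1 s2 \<le> real N"
  shows "cor_sum s1 s2 (int (Suc N)) \<le> cor_sum s1 s2 (int N)"
proof (cases "N < s2 \<and> N < 2*s1")
  case False
  then have "real (s2 choose Suc N) = 0 \<or> square_coeff s1 (Suc N) = 0"
    by (auto intro: square_coeff_eq_0 simp del: binomial_eq_0_iff simp: binomial_eq_0)
  then have "real (cor_sum s1 s2 (int (Suc N))) = 0"
    unfolding cor_sum_eq by auto
  then show ?thesis by linarith
next
  case True
  define S n where "S = real s1" and "n = real N"
  have "2*(2*S - n) * ((real s2 - n) * square_coeff s1 (Suc N)) \<le> (n + 1)^2 * square_coeff s1 (Suc N)"
    using above_mode_bound[OF above] True square_coeff_nonneg unfolding S_def n_def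
    by (metis less_imp_le mult.assoc mult_right_mono)
  also have "\<dots> \<le> 2*(2*S - n) * square_coeff s1 N"
    using ratio_bounds_all[OF s1] True unfolding ratio_bounds_def S_def n_def by simp
  finally have "(real s2 - n) * square_coeff s1 (Suc N) \<le> square_coeff s1 N"
    using True unfolding S_def n_def by simp
  then have "real (s2 choose N) * fact N * ((real s2 - n) * square_coeff s1 (Suc N))
      \<le> real (s2 choose N) * fact N * square_coeff s1 N"
    by (intro mult_left_mono) auto
  moreover have "real (cor_sum s1 s2 (int (Suc N)))
      = real (s2 choose N) * fact N * ((real s2 - n) * square_coeff s1 (Suc N))"
    using True unfolding n_def by (intro cor_sum_Suc) simp
  ultimately have "real (cor_sum s1 s2 (int (Suc N))) \<le> real (cor_sum s1 s2 (int N))"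
    unfolding cor_sum_eq[of s1 s2 N] by linarith
  then show ?thesis by (simp only: of_nat_le_iff)
qed

lemma unimodal_le_max:
  fixes f :: "nat \<Rightarrow> 'a::linorder"
  assumes up: "\<And>k. k < m \<Longrightarrow> f k \<le> f (Suc k)"
    and down: "\<And>k. m < k \<Longrightarrow> f (Suc k) \<le> f k"
  shows "f n \<le> max (f m) (f (Suc m))"
proof (cases "n \<le> m")
  case True
  have "f n \<le> f m" by (rule lift_Suc_mono_le_ivl[where N="{..<m}", OF _ True]) (auto intro: up)
  then show ?thesis by (rule max.coboundedI1)
next
  case False
  then have n: "Suc m \<le> n" by simp
  have "f n \<le> f (Suc m)" by (rule lift_Suc_antimono_le_ivl[where N="{Suc m..}", OF _ n]) (auto intro: down)
  then show ?thesis by (rule max.coboundedI2)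
qed

lemma cor_sum_le_at_mode:
  assumes s1: "1 \<le> s1"
  shows "\<exists>\<delta>\<in>{0, 1::int}. \<forall>M. cor_sum s1 s2 M \<le> cor_sum s1 s2 (\<lfloor>mode_bound s1 s2\<rfloor> + \<delta>)"
proof -
  define f where "f n = cor_sum s1 s2 (int n)" for n
  define m where "m = nat \<lfloor>mode_bound s1 s2\<rfloor>"
  have m: "\<lfloor>mode_bound s1 s2\<rfloor> = int m" using mode_bound_pos[of s1 s2] unfolding m_def by simp
  have m_le: "real m \<le> mode_bound s1 s2" and m_gt: "mode_bound s1 s2 < real m + 1"
    using floor_correct[of "mode_bound s1 s2"] unfolding m by simp_all
  have le_max: "f n \<le> max (f m) (f (Suc m))" for n
  proof (rule unimodal_le_max)
    show "f k \<le> f (Suc k)" if "k < m" for k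
      using that m_le cor_sum_le_Suc_below_mode[OF s1, where N=k] unfolding f_def by simp
    show "f (Suc k) \<le> f k" if "m < k" for k
      using that m_gt cor_sum_Suc_le_above_mode[OF s1, where N=k] unfolding f_def by simp
  qed
  define \<delta> :: int where "\<delta> = (if f (Suc m) \<le> f m then 0 else 1)"
  have max: "f n \<le> cor_sum s1 s2 (\<lfloor>mode_bound s1 s2\<rfloor> + \<delta>)" for n
    using le_max[of n] unfolding m \<delta>_def f_def by (auto simp: add.commute)
  have "cor_sum s1 s2 M \<le> cor_sum s1 s2 (\<lfloor>mode_bound s1 s2\<rfloor> + \<delta>)" for M
  proof (cases "M < 0")
    case False
    then obtain n where "M = int n" by (metis nonneg_int_cases not_less)
    then show ?thesis using max[of n] unfolding f_def by simp
  qed (simp add: cor_sum_def)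
  moreover have "\<delta> \<in> {0, 1}" unfolding \<delta>_def by simp
  ultimately show ?thesis by blast
qed

lemma card_union_size_fibre:
  assumes fin: "finite Ah" "finite Bh" "finite Ch"
  shows "card {\<omega> \<in> sample_space Ah Bh Ch.
      union_size Ah Bh Ch \<omega> = int (card Ah + card Bh + card Ch) - int N}
    = (\<Sum>k\<le>N. (card Bh choose k) * (card Bh - k choose (N - k))
        * ((card Ah choose k) * (card Ch choose (N - k))))"
proof -
  define sub where "sub k X = {Y. Y \<subseteq> X \<and> card Y = k}" for k and X :: "'a set"
  have fin_sub: "finite X \<Longrightarrow> finite (sub k X)" for k X
    unfolding sub_def by (rule finite_subset[of _ "Pow X"]) auto
  have card_sub: "finite X \<Longrightarrow> card (sub k X) = card X choose k" for k X
    unfolding sub_def by (rule n_subsets)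
  let ?T = "SIGMA k:{..N}. SIGMA B1:sub k Bh. SIGMA B2:sub (N - k) (Bh - B1). sub k Ah \<times> sub (N - k) Ch"
  let ?f = "\<lambda>(k::nat, B1, B2, A1, C2). (A1, B1, B2, C2)"
  have "{\<omega> \<in> sample_space Ah Bh Ch. union_size Ah Bh Ch \<omega> = int (card Ah + card Bh + card Ch) - int N}
      = ?f ` ?T"
  proof (intro equalityI subsetI)
    fix \<omega> assume "\<omega> \<in> {\<omega> \<in> sample_space Ah Bh Ch.
      union_size Ah Bh Ch \<omega> = int (card Ah + card Bh + card Ch) - int N}"
    then obtain A1 B1 B2 C2 where \<omega>: "\<omega> = (A1, B1, B2, C2)" and
      "A1 \<subseteq> Ah" "B1 \<subseteq> Bh" "B2 \<subseteq> Bh" "C2 \<subseteq> Ch" "card A1 = card B1" "card B2 = card C2"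
      "B1 \<inter> B2 = {}" "card B1 + card B2 = N"
      unfolding sample_space_def union_size_def by auto
    then have "(card B1, B1, B2, A1, C2) \<in> ?T" unfolding sub_def by auto
    then show "\<omega> \<in> ?f ` ?T" unfolding \<omega> by force
  next
    fix \<omega> assume "\<omega> \<in> ?f ` ?T"
    then show "\<omega> \<in> {\<omega> \<in> sample_space Ah Bh Ch.
      union_size Ah Bh Ch \<omega> = int (card Ah + card Bh + card Ch) - int N}"
      unfolding sample_space_def union_size_def sub_def by auto
  qed
  moreover have "inj_on ?f ?T" by (rule inj_onI) (auto simp: sub_def)
  then have "card (?f ` ?T) = card ?T" by (rule card_image)
  moreover have "card ?T = (\<Sum>k\<le>N. \<Sum>B1\<in>sub k Bh. (card Bh - k choose (N - k))
      * ((card Ah choose k) * (card Ch choose (N - k))))"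
  proof -
    have "card (Bh - B1) = card Bh - k" if "B1 \<in> sub k Bh" for k B1
      using that fin(2) unfolding sub_def by (metis (mono_tags) card_Diff_subset finite_subset mem_Collect_eq)
    then show ?thesis
      using fin by (simp add: fin_sub card_sub finite_SigmaI card_cartesian_product card_SigmaI)
  qed
  ultimately show ?thesis using fin by (simp add: card_sub mult.assoc)
qed

lemma cor_sum_eq_sum_choose:
  "cor_sum s1 s2 (int N) =
    (\<Sum>k\<le>N. (s2 choose k) * (s2 - k choose (N - k)) * ((s1 choose k) * (s1 choose (N - k))))"
proof -
  have "(s2 choose N) * (N choose k) = (s2 choose k) * (s2 - k choose (N - k))" if "k \<le> N" for k
  proof (cases "N \<le> s2")
    case True
    then show ?thesis using choose_mult[OF that True] by simp
  next
    case False
    then show ?thesis by (cases "k \<le> s2") (auto simp: binomial_eq_0)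
  qed
  then show ?thesis unfolding cor_sum_def
    by (auto intro!: sum.cong simp: algebra_simps)
qed

lemma prob_union_eq_cor_sum:
  assumes fin: "finite Ah" "finite Bh" "finite Ch"
    and card: "card Ah = s1" "card Bh = s2" "card Ch = s1"
  shows "prob_union Ah Bh Ch v =
    real (cor_sum s1 s2 (int (2*s1 + s2) - v)) / real (card (sample_space Ah Bh Ch))"
proof (cases "v \<le> int (2*s1 + s2)")
  case True
  define N where "N = nat (int (2*s1 + s2) - v)"
  have N: "int (2*s1 + s2) - v = int N" using True unfolding N_def by simp
  have "int (card Ah + card Bh + card Ch) - int N = v" using N card by simp
  from card_union_size_fibre[OF fin, of N, unfolded this]
  have "card {\<omega> \<in> sample_space Ah Bh Ch. union_size Ah Bh Ch \<omega> = v} = cor_sum s1 s2 (int N)"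
    unfolding card cor_sum_eq_sum_choose .
  then show ?thesis unfolding prob_union_def N by simp
next
  case False
  then have "{\<omega> \<in> sample_space Ah Bh Ch. union_size Ah Bh Ch \<omega> = v} = {}"
    unfolding sample_space_def union_size_def card by auto
  then show ?thesis using False unfolding prob_union_def cor_sum_def by (simp only: card.empty) simp
qed

theorem corollary1p2:
  fixes s1 s2 :: nat and Ah Bh Ch :: "'a set"
  assumes "s1 \<ge> 1"
    and "finite Ah" and "finite Bh" and "finite Ch"
    and "Ah \<inter> Bh = {}" and "Ah \<inter> Ch = {}" and "Bh \<inter> Ch = {}"
    and "card Ah = s1" and "card Bh = s2" and "card Ch = s1"
  shows "\<exists>\<delta>\<in>{0, 1::int}.
     (\<forall>M::int. cor_sum s1 s2 M \<le> cor_sum s1 s2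
        (\<lfloor>2 * real s1 + real s2 + 3/2 - sqrt (4 * real s1 ^ 2 + 4 * real s1 + (real s2 + 1/2) ^ 2)\<rfloor> + \<delta>))
   \<and> (\<forall>v::int. prob_union Ah Bh Ch v \<le> prob_union Ah Bh Ch
        (\<lceil>sqrt (4 * real s1 ^ 2 + 4 * real s1 + (real s2 + 1/2) ^ 2) - 3/2\<rceil> - \<delta>))"
proof -
  obtain \<delta> where \<delta>: "\<delta> \<in> {0, 1::int}"
    and max: "\<forall>M. cor_sum s1 s2 M \<le> cor_sum s1 s2 (\<lfloor>mode_bound s1 s2\<rfloor> + \<delta>)"
    using cor_sum_le_at_mode[OF assms(1)] by blast
  define x where "x = sqrt (4 * real s1 ^ 2 + 4 * real s1 + (real s2 + 1/2) ^ 2) - 3/2"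
  have "mode_bound s1 s2 = real (2*s1 + s2) - x" unfolding mode_bound_def x_def by simp
  then have "\<lfloor>mode_bound s1 s2\<rfloor> = int (2*s1 + s2) - \<lceil>x\<rceil>"
    using ceiling_correct[of x] by (intro floor_unique) simp_all
  then have mode: "int (2*s1 + s2) - (\<lceil>x\<rceil> - \<delta>) = \<lfloor>mode_bound s1 s2\<rfloor> + \<delta>" by simp
  have "prob_union Ah Bh Ch v \<le> prob_union Ah Bh Ch (\<lceil>x\<rceil> - \<delta>)" for v
    unfolding prob_union_eq_cor_sum[OF assms(2-4,8-10)] mode using max by (simp add: divide_right_mono)
  with \<delta> max show ?thesis unfolding x_def mode_bound_def by blast
qed

end
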